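(* Let $\mathbf L$ be an algebraic lattice and let $\eta:L\to L$ satisfy: (I1) $\eta(x)\le x$; (I2) $x\ge y$ implies $\eta(x)\ge\eta(y)$; (I3) $\eta^2(x)=\eta(x)$; (I4) $\eta(1)=1$; (I5) if $\eta(x)=u$ for all $x\in X\subseteq L$ then $\eta(\bigvee X)=u$. Define $\tau(x)=\bigvee\{z\in L:\eta(z)=\eta(x)\}$. Then for any subset $\{x_j:j\in J\}\subseteq L$, \[ \tau\Big(\bigwedge_{j\in J}x_j\Big)\ \ge\ \bigwedge_{j\in J}\tau(x_j). \] *)

theory Defs
  imports Main
begin

definition compact_elem :: "'a::complete_lattice \<Rightarrow> bool" where
  "compact_elem c \<longleftrightarrow> (\<forall>S. c \<le> Sup S \<longrightarrow> (\<exists>T. T \<subseteq> S \<and> finite T \<and> c \<le> Sup T))"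

definition algebraic_lattice :: "'a::complete_lattice itself \<Rightarrow> bool" where
  "algebraic_lattice _ \<longleftrightarrow> (\<forall>x::'a. x = Sup {c. compact_elem c \<and> c \<le> x})"

definition tau_of :: "('a::complete_lattice \<Rightarrow> 'a) \<Rightarrow> 'a \<Rightarrow> 'a" where
  "tau_of \<eta> x = Sup {z. \<eta> z = \<eta> x}"

end

theory Submission
  imports Defs
begin

text \<open>Since \<open>\<eta>\<close> is constant on the set defining \<open>\<tau>(x)\<close>, axiom (I5) gives
  \<open>\<eta>(\<tau>(x)) = \<eta>(x)\<close>. Put \<open>m = \<Sqinter>\<^sub>j \<tau>(x\<^sub>j)\<close>. Then \<open>m \<ge> \<Sqinter>\<^sub>j x\<^sub>j\<close>, and
  \<open>\<eta>(m) \<le> \<eta>(\<tau>(x\<^sub>j)) = \<eta>(x\<^sub>j) \<le> x\<^sub>j\<close> for every \<open>j\<close>, so \<open>\<eta>(m) \<le> \<Sqinter>\<^sub>j x\<^sub>j\<close> and by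
  idempotence \<open>\<eta>(m) = \<eta>(\<Sqinter>\<^sub>j x\<^sub>j)\<close>. Hence \<open>m\<close> is one of the elements joined in
  \<open>\<tau>(\<Sqinter>\<^sub>j x\<^sub>j)\<close>.\<close>

lemma le_tau_ofI: "\<eta> z = \<eta> y \<Longrightarrow> z \<le> tau_of \<eta> y"
  unfolding tau_of_def by (rule Sup_upper) simp

lemma le_tau_of: "y \<le> tau_of \<eta> y"
  by (rule le_tau_ofI) (rule refl)

lemma eta_tau_of:
  assumes "\<And>X u. X \<noteq> {} \<Longrightarrow> (\<forall>y\<in>X. \<eta> y = u) \<Longrightarrow> \<eta> (Sup X) = u"
  shows "\<eta> (tau_of \<eta> y) = \<eta> y"
  unfolding tau_of_def by (rule assms) auto

lemma kernel_le_INF: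
  fixes \<eta> :: "'a::complete_lattice \<Rightarrow> 'a"
  assumes deflationary: "\<And>y. \<eta> y \<le> y"
    and mono: "\<And>y z. z \<le> y \<Longrightarrow> \<eta> z \<le> \<eta> y"
    and idem: "\<And>y. \<eta> (\<eta> y) = \<eta> y"
    and le: "\<And>j. j \<in> J \<Longrightarrow> \<eta> m \<le> \<eta> (x j)"
  shows "\<eta> m \<le> \<eta> (INF j\<in>J. x j)"
proof -
  have "\<eta> m \<le> x j" if "j \<in> J" for j
    using le[OF that] deflationary by (rule order_trans)
  hence "\<eta> m \<le> (INF j\<in>J. x j)" by (rule INF_greatest)
  hence "\<eta> (\<eta> m) \<le> \<eta> (INF j\<in>J. x j)" by (rule mono)
  thus ?thesis by (simp only: idem)
qed

theorem lemma5p3: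
  fixes \<eta> :: "'a::complete_lattice \<Rightarrow> 'a" and x :: "'j \<Rightarrow> 'a" and J :: "'j set"
  assumes alg: "algebraic_lattice TYPE('a)"
    and I1: "\<And>y. \<eta> y \<le> y"
    and I2: "\<And>y z. z \<le> y \<Longrightarrow> \<eta> z \<le> \<eta> y"
    and I3: "\<And>y. \<eta> (\<eta> y) = \<eta> y"
    and I4: "\<eta> top = top"
    and I5: "\<And>X u. X \<noteq> {} \<Longrightarrow> (\<forall>y\<in>X. \<eta> y = u) \<Longrightarrow> \<eta> (Sup X) = u"
  shows "tau_of \<eta> (INF j\<in>J. x j) \<ge> (INF j\<in>J. tau_of \<eta> (x j))"
proof -
  have eta_tau: "\<eta> (tau_of \<eta> y) = \<eta> y" for y
    using I5 by (rule eta_tau_of)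
  define m where "m = (INF j\<in>J. tau_of \<eta> (x j))"
  have "(INF j\<in>J. x j) \<le> m"
    unfolding m_def by (rule INF_mono) (use le_tau_of in blast)
  hence "\<eta> (INF j\<in>J. x j) \<le> \<eta> m" by (rule I2)
  moreover have "\<eta> m \<le> \<eta> (INF j\<in>J. x j)"
  proof (rule kernel_le_INF[OF I1 I2 I3])
    fix j assume "j \<in> J"
    hence "\<eta> m \<le> \<eta> (tau_of \<eta> (x j))" unfolding m_def by (intro I2 INF_lower)
    thus "\<eta> m \<le> \<eta> (x j)" by (simp only: eta_tau)
  qed
  ultimately have "\<eta> m = \<eta> (INF j\<in>J. x j)" by (rule antisym[rotated])
  thus ?thesis unfolding m_def by (rule le_tau_ofI)
qed

end
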